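(* Under the network setting of the context, after a suitable relabeling of the classes $\mathcal I$, there exist a lower-triangular matrix $B_1\in\mathbb R^{I\times I}$ with strictly positive diagonal entries and a matrix $B_2\in\mathbb R^{I\times J}$ such that for all $x\in\mathbb R^I$ and $u=(u^c,u^s)\in\mathbb U$, $$b(x,u)=-B_1\big(x-(e\cdot x)^+u^c\big)+(e\cdot x)^-B_2u^s-(e\cdot x)^+\Gamma u^c+\ell,$$ where $\Gamma=\operatorname{diag}(\gamma_1,\dots,\gamma_I)$.
   Context: Network setting. Let $\mathcal I=\{1,\dots,I\}$ (customer classes), $\mathcal J=\{1,\dots,J\}$ (server pools), and let $\mathcal G$ be a bipartite graph on $\mathcal I\cup\mathcal J$ with edge set $\mathcal E\subset\mathcal I\times\mathcal J$ (write $i\sim j$ if $(i,j)\in\mathcal E$) which is a tree; $\mathcal J(i)=\{j:i\sim j\}$. Given constants $\lambda_i>0$, $\gamma_i\ge0$, $\ell_i\in\mathbb R$ for $i\in\mathcal I$, and $\mu_{ij}>0$ if $i\sim j$, $\mu_{ij}=0$ otherwise. $e$ denotes the all-ones vector, $a^+=\max(a,0)$, $a^-=-\min(a,0)$. For $(\alpha,\beta)\in\mathbb R^I\times\mathbb R^J$ with $e\cdot\alpha=e\cdot\beta$, $G(\alpha,\beta)$ is the unique matrix $\psi\in\mathbb R^{I\times J}$ with $\sum_j\psi_{ij}=\alpha_i$ for all $i$, $\sum_i\psi_{ij}=\beta_j$ for all $j$, and $\psi_{ij}=0$ whenever $i\not\sim j$ (existence and uniqueness hold since $\mathcal G$ is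 a tree). Action set $\mathbb U=\{u=(u^c,u^s)\in\mathbb R^I_+\times\mathbb R^J_+: e\cdot u^c=e\cdot u^s=1\}$. For $x\in\mathbb R^I$, $u\in\mathbb U$: $\hat G[u](x)=G\big(x-(e\cdot x)^+u^c,\,-(e\cdot x)^-u^s\big)$ and the drift $b_i(x,u)=-\sum_{j\in\mathcal J(i)}\mu_{ij}\hat G_{ij}[u](x)-\gamma_i(e\cdot x)^+u^c_i+\ell_i$, $i\in\mathcal I$. *)

theory Defs
  imports "HOL-Analysis.Analysis"
begin

text \<open>Classes are indexed by {..<nI}, pools by {..<nJ}; vectors are functions nat => real,
  matrices are functions nat => nat => real (only entries in range matter).\<close>

definition netV :: "nat \<Rightarrow> nat \<Rightarrow> (nat + nat) set" where
  "netV nI nJ = Inl ` {..<nI} \<union> Inr ` {..<nJ}"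

fun netAdj :: "(nat \<times> nat) set \<Rightarrow> nat + nat \<Rightarrow> nat + nat \<Rightarrow> bool" where
  "netAdj E (Inl i) (Inr j) = ((i, j) \<in> E)"
| "netAdj E (Inr j) (Inl i) = ((i, j) \<in> E)"
| "netAdj E _ _ = False"

definition is_walk :: "(nat \<times> nat) set \<Rightarrow> (nat + nat) list \<Rightarrow> bool" where
  "is_walk E ps = (ps \<noteq> [] \<and> (\<forall>k. Suc k < length ps \<longrightarrow> netAdj E (ps ! k) (ps ! Suc k)))"

definition graph_connected :: "nat \<Rightarrow> nat \<Rightarrow> (nat \<times> nat) set \<Rightarrow> bool" where
  "graph_connected nI nJ E = (\<forall>v\<in>netV nI nJ. \<forall>w\<in>netV nI nJ.
      \<exists>ps. is_walk E ps \<and> set ps \<subseteq> netV nI nJ \<and> hd ps = v \<and> last ps = w)"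

definition has_cycle :: "nat \<Rightarrow> nat \<Rightarrow> (nat \<times> nat) set \<Rightarrow> bool" where
  "has_cycle nI nJ E = (\<exists>ps. is_walk E ps \<and> set ps \<subseteq> netV nI nJ \<and> distinct ps \<and>
      length ps \<ge> 3 \<and> netAdj E (last ps) (hd ps))"

definition is_tree :: "nat \<Rightarrow> nat \<Rightarrow> (nat \<times> nat) set \<Rightarrow> bool" where
  "is_tree nI nJ E = (E \<subseteq> {..<nI} \<times> {..<nJ} \<and> graph_connected nI nJ E \<and> \<not> has_cycle nI nJ E)"

definition Gmat :: "nat \<Rightarrow> nat \<Rightarrow> (nat \<times> nat) set \<Rightarrow> (nat \<Rightarrow> real) \<Rightarrow> (nat \<Rightarrow> real)
    \<Rightarrow> (nat \<Rightarrow> nat \<Rightarrow> real)" where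
  "Gmat nI nJ E \<alpha> \<beta> = (THE \<psi>. (\<forall>i<nI. (\<Sum>j<nJ. \<psi> i j) = \<alpha> i) \<and>
                               (\<forall>j<nJ. (\<Sum>i<nI. \<psi> i j) = \<beta> j) \<and>
                               (\<forall>i j. (i, j) \<notin> E \<longrightarrow> \<psi> i j = 0))"

definition pospart :: "real \<Rightarrow> real" where "pospart a = max a 0"
definition negpart :: "real \<Rightarrow> real" where "negpart a = - min a 0"

definition esum :: "nat \<Rightarrow> (nat \<Rightarrow> real) \<Rightarrow> real" where
  "esum n x = (\<Sum>k<n. x k)"

definition actU :: "nat \<Rightarrow> nat \<Rightarrow> (nat \<Rightarrow> real) \<Rightarrow> (nat \<Rightarrow> real) \<Rightarrow> bool" where
  "actU nI nJ uc us = ((\<forall>i<nI. uc i \<ge> 0) \<and> (\<forall>j<nJ. us j \<ge> 0) \<and>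
                       esum nI uc = 1 \<and> esum nJ us = 1)"

definition Ghat :: "nat \<Rightarrow> nat \<Rightarrow> (nat \<times> nat) set \<Rightarrow> (nat \<Rightarrow> real) \<Rightarrow> (nat \<Rightarrow> real)
    \<Rightarrow> (nat \<Rightarrow> real) \<Rightarrow> (nat \<Rightarrow> nat \<Rightarrow> real)" where
  "Ghat nI nJ E uc us x = Gmat nI nJ E
      (\<lambda>i. x i - pospart (esum nI x) * uc i)
      (\<lambda>j. - negpart (esum nI x) * us j)"

definition drift :: "nat \<Rightarrow> nat \<Rightarrow> (nat \<times> nat) set \<Rightarrow> (nat \<Rightarrow> nat \<Rightarrow> real) \<Rightarrow> (nat \<Rightarrow> real)
    \<Rightarrow> (nat \<Rightarrow> real) \<Rightarrow> (nat \<Rightarrow> real) \<Rightarrow> (nat \<Rightarrow> real) \<Rightarrow> (nat \<Rightarrow> real) \<Rightarrow> nat \<Rightarrow> real" where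
  "drift nI nJ E \<mu> \<gamma> ell x uc us i =
     - (\<Sum>j\<in>{j. j < nJ \<and> (i, j) \<in> E}. \<mu> i j * Ghat nI nJ E uc us x i j)
     - \<gamma> i * pospart (esum nI x) * uc i + ell i"

end

theory Submission
  imports Defs
begin

text \<open>
  A finite tree with at least two vertices has a leaf whose removal leaves a tree. Peeling leaves
  off the class/pool tree solves the transportation problem defining \<open>G(\<alpha>, \<beta>)\<close> one edge at a
  time: a leaf class \<open>i0\<close> attached to pool \<open>j0\<close> must send all of \<open>\<alpha> i0\<close> along \<open>(i0, j0)\<close>, and a
  leaf pool \<open>j0\<close> attached to class \<open>i0\<close> must receive all of \<open>\<beta> j0\<close> from it; in both cases the
  remaining margins form the same problem on the smaller tree. Hence \<open>G(\<alpha>, \<beta>)\<close> exists and is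
  unique, and by the same induction every service rate \<open>\<Sum>j. \<mu> i j * G(\<alpha>, \<beta>) i j\<close> is linear in
  \<open>(\<alpha>, \<beta>)\<close>. Ranking the classes in the order in which they are peeled makes the coefficients of
  \<open>\<alpha>\<close> lower triangular, the diagonal entry of a peeled class \<open>i0\<close> being \<open>\<mu> i0 j0 > 0\<close>.
  Substituting \<open>\<alpha> = x - (e\<cdot>x)\<^sup>+ u\<^sup>c\<close> and \<open>\<beta> = -(e\<cdot>x)\<^sup>- u\<^sup>s\<close> into the drift gives the theorem.
\<close>

section \<open>Leaves of finite trees\<close>

definition walk_connected :: "'a set \<Rightarrow> ('a \<Rightarrow> 'a \<Rightarrow> bool) \<Rightarrow> bool" where
  "walk_connected V R \<longleftrightarrow> (\<forall>v\<in>V. \<forall>w\<in>V. \<exists>ps. ps \<noteq> [] \<and> successively R ps \<and> set ps \<subseteq> V \<and>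
      hd ps = v \<and> last ps = w)"

definition is_path :: "'a set \<Rightarrow> ('a \<Rightarrow> 'a \<Rightarrow> bool) \<Rightarrow> 'a list \<Rightarrow> bool" where
  "is_path V R ps \<longleftrightarrow> successively R ps \<and> distinct ps \<and> set ps \<subseteq> V"

definition cycle_free :: "'a set \<Rightarrow> ('a \<Rightarrow> 'a \<Rightarrow> bool) \<Rightarrow> bool" where
  "cycle_free V R \<longleftrightarrow> \<not> (\<exists>ps. is_path V R ps \<and> 3 \<le> length ps \<and> R (last ps) (hd ps))"

lemma walk_shortcut:
  assumes "successively R ps" "ps \<noteq> []"
  obtains qs where "successively R qs" "distinct qs" "qs \<noteq> []" "set qs \<subseteq> set ps"
    "hd qs = hd ps" "last qs = last ps"
  using assms
proof (induction "length ps" arbitrary: ps rule: less_induct)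
  case less
  show ?case
  proof (cases "distinct ps")
    case True
    then show ?thesis using less.prems by blast
  next
    case False
    then obtain xs y ys zs where ps: "ps = xs @ y # ys @ y # zs"
      using not_distinct_decomp by fastforce
    let ?ps' = "xs @ y # zs"
    have "successively R ?ps'"
      using \<open>successively R ps\<close> by (auto simp: ps successively_append_iff successively_Cons)
    moreover have "hd ?ps' = hd ps" "last ?ps' = last ps" "set ?ps' \<subseteq> set ps"
      by (cases xs; cases zs; auto simp: ps)+
    ultimately show ?thesis
      using less.hyps[of ?ps'] less.prems(1) by (force simp: ps)
  qed
qed

lemma longest_path_exists:
  assumes "finite V" "is_path V R p"
  obtains ps where "is_path V R ps" "\<And>qs. is_path V R qs \<Longrightarrow> length qs \<le> length ps"
proof -
  have "length qs < Suc (card V)" if "is_path V R qs" for qs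
    using that assms(1) by (metis is_path_def card_mono distinct_card less_Suc_eq_le)
  then show ?thesis
    using that ex_has_greatest_nat[of "is_path V R" p length "Suc (card V)"] assms(2) by blast
qed

lemma cycle_free_has_leaf:
  assumes "finite V" "symp R" "irreflp R" "\<And>a b. R a b \<Longrightarrow> a \<in> V"
    and "cycle_free V R" "R a b"
  shows "\<exists>v\<in>V. \<exists>u. R v u \<and> (\<forall>w. R v w \<longrightarrow> w = u)"
proof -
  have ab: "is_path V R [a, b]"
    using assms(2-4,6) by (auto simp: is_path_def irreflp_def dest: sympD)
  then obtain ps where ps: "is_path V R ps" and longest: "\<And>qs. is_path V R qs \<Longrightarrow> length qs \<le> length ps"
    using longest_path_exists[OF assms(1)] by blast
  have "2 \<le> length ps"
    using longest[OF ab] by simp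
  then obtain v u rest where ps_eq: "ps = v # u # rest"
    by (metis Suc_le_length_iff numeral_2_eq_2)
  \<comment> \<open>The start of a longest path is a leaf: another neighbour would extend the path or close a cycle.\<close>
  have "w = u" if "R v w" for w
  proof (rule ccontr)
    assume "w \<noteq> u"
    have "w \<noteq> v"
      using that assms(3) by (auto simp: irreflp_def)
    show False
    proof (cases "w \<in> set ps")
      case False
      have "is_path V R (w # ps)"
        using ps False \<open>R v w\<close> assms(2,4) by (auto simp: is_path_def ps_eq symp_def)
      then show False
        using longest by fastforce
    next
      case True
      then obtain xs ys where rest: "rest = xs @ w # ys"
        using \<open>w \<noteq> v\<close> \<open>w \<noteq> u\<close> by (auto simp: ps_eq dest: split_list)
      let ?cyc = "v # u # xs @ [w]"
      have "ps = ?cyc @ ys"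
        by (simp add: ps_eq rest)
      then have "is_path V R ?cyc"
        using ps unfolding is_path_def by (metis successively_append_iff distinct_append set_append le_sup_iff)
      moreover have "3 \<le> length ?cyc" "R (last ?cyc) (hd ?cyc)"
        using \<open>R v w\<close> assms(2) by (auto dest: sympD)
      ultimately show False
        using assms(5) unfolding cycle_free_def by blast
    qed
  qed
  moreover have "v \<in> V" "R v u"
    using ps by (auto simp: is_path_def ps_eq)
  ultimately show ?thesis
    by blast
qed

lemma walk_connected_has_edge:
  assumes "walk_connected V R" "a \<in> V" "b \<in> V" "a \<noteq> b"
  shows "\<exists>x y. R x y"
proof -
  obtain ps where "ps \<noteq> []" "successively R ps" "hd ps = a" "last ps = b"
    using assms(1-3) unfolding walk_connected_def by blast
  then obtain y ys where "ps = a # y # ys"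
    using assms(4) by (cases ps rule: remdups_adj.cases) auto
  then show ?thesis
    using \<open>successively R ps\<close> by auto
qed

lemma walk_connected_remove_leaf:
  assumes "walk_connected V R" "symp R" "\<And>w. R v w \<Longrightarrow> w = u"
  shows "walk_connected (V - {v}) (\<lambda>a b. R a b \<and> a \<noteq> v \<and> b \<noteq> v)"
  unfolding walk_connected_def
proof (intro ballI)
  fix a b assume a: "a \<in> V - {v}" and b: "b \<in> V - {v}"
  obtain ps where ps: "ps \<noteq> []" "successively R ps" "set ps \<subseteq> V" "hd ps = a" "last ps = b"
    using assms(1) a b unfolding walk_connected_def by blast
  then obtain qs where qs: "successively R qs" "distinct qs" "qs \<noteq> []" "set qs \<subseteq> V"
    "hd qs = a" "last qs = b"
    by (metis walk_shortcut subset_trans)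
  \<comment> \<open>An interior vertex of a path has two distinct neighbours on it, a leaf only one.\<close>
  have "v \<notin> set qs"
  proof
    assume "v \<in> set qs"
    then obtain xs ys where qs_eq: "qs = xs @ v # ys"
      by (metis split_list)
    obtain x xs' where "xs = xs' @ [x]"
      using qs(5) a qs_eq by (cases xs rule: rev_cases) auto
    moreover obtain y ys' where "ys = y # ys'"
      using qs(6) b qs_eq by (cases ys) auto
    ultimately have "qs = xs' @ [x, v, y] @ ys'"
      using qs_eq by simp
    then have "R x v" "R v y" "x \<noteq> y"
      using qs(1,2) by (auto simp: successively_append_iff)
    then show False
      using assms(2,3) by (metis sympD)
  qed
  then have "successively (\<lambda>a b. R a b \<and> a \<noteq> v \<and> b \<noteq> v) qs"
    using qs(1) by (auto elim: successively_mono)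
  then show "\<exists>ps. ps \<noteq> [] \<and> successively (\<lambda>a b. R a b \<and> a \<noteq> v \<and> b \<noteq> v) ps \<and>
      set ps \<subseteq> V - {v} \<and> hd ps = a \<and> last ps = b"
    using qs \<open>v \<notin> set qs\<close> by blast
qed

lemma cycle_free_mono:
  assumes "cycle_free V R" "V' \<subseteq> V" "\<And>a b. R' a b \<Longrightarrow> R a b"
  shows "cycle_free V' R'"
  using assms unfolding cycle_free_def is_path_def by (meson order_trans successively_mono)

section \<open>Bipartite trees\<close>

definition bip_tree :: "nat set \<Rightarrow> nat set \<Rightarrow> (nat \<times> nat) set \<Rightarrow> bool" where
  "bip_tree CI CJ E \<longleftrightarrow> finite CI \<and> finite CJ \<and> E \<subseteq> CI \<times> CJ \<and>
     walk_connected (Inl ` CI \<union> Inr ` CJ) (netAdj E) \<and> cycle_free (Inl ` CI \<union> Inr ` CJ) (netAdj E)"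

lemma symp_netAdj: "symp (netAdj E)"
proof (rule sympI)
  show "netAdj E b a" if "netAdj E a b" for a b
    using that by (cases a; cases b) auto
qed

lemma irreflp_netAdj: "irreflp (netAdj E)"
proof (rule irreflpI)
  show "\<not> netAdj E a a" for a
    by (cases a) auto
qed

lemma netAdj_in_vertices: "E \<subseteq> CI \<times> CJ \<Longrightarrow> netAdj E a b \<Longrightarrow> a \<in> Inl ` CI \<union> Inr ` CJ"
  by (cases a; cases b) auto

lemma netAdj_remove_class:
  "netAdj {e \<in> E. fst e \<noteq> i0} = (\<lambda>a b. netAdj E a b \<and> a \<noteq> Inl i0 \<and> b \<noteq> Inl i0)"
proof (intro ext)
  show "netAdj {e \<in> E. fst e \<noteq> i0} a b = (netAdj E a b \<and> a \<noteq> Inl i0 \<and> b \<noteq> Inl i0)" for a b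
    by (cases a; cases b) auto
qed

lemma netAdj_remove_pool:
  "netAdj {e \<in> E. snd e \<noteq> j0} = (\<lambda>a b. netAdj E a b \<and> a \<noteq> Inr j0 \<and> b \<noteq> Inr j0)"
proof (intro ext)
  show "netAdj {e \<in> E. snd e \<noteq> j0} a b = (netAdj E a b \<and> a \<noteq> Inr j0 \<and> b \<noteq> Inr j0)" for a b
    by (cases a; cases b) auto
qed

lemma bip_tree_remove_leaf:
  assumes tree: "bip_tree CI CJ E" and leaf: "\<And>w. netAdj E v w \<Longrightarrow> w = u"
  shows "v = Inl i0 \<Longrightarrow> bip_tree (CI - {i0}) CJ {e \<in> E. fst e \<noteq> i0}"
    and "v = Inr j0 \<Longrightarrow> bip_tree CI (CJ - {j0}) {e \<in> E. snd e \<noteq> j0}"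
proof -
  let ?V = "Inl ` CI \<union> Inr ` CJ"
  have conn: "walk_connected (?V - {v}) (\<lambda>a b. netAdj E a b \<and> a \<noteq> v \<and> b \<noteq> v)"
    using tree walk_connected_remove_leaf[OF _ symp_netAdj leaf] unfolding bip_tree_def by blast
  have acyc: "cycle_free (?V - {v}) (\<lambda>a b. netAdj E a b \<and> a \<noteq> v \<and> b \<noteq> v)"
    using tree unfolding bip_tree_def by (auto intro: cycle_free_mono)
  show "bip_tree (CI - {i0}) CJ {e \<in> E. fst e \<noteq> i0}" if "v = Inl i0"
  proof -
    have "?V - {v} = Inl ` (CI - {i0}) \<union> Inr ` CJ"
      using that by auto
    then show ?thesis
      using tree conn acyc that unfolding bip_tree_def netAdj_remove_class by auto
  qed
  show "bip_tree CI (CJ - {j0}) {e \<in> E. snd e \<noteq> j0}" if "v = Inr j0"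
  proof -
    have "?V - {v} = Inl ` CI \<union> Inr ` (CJ - {j0})"
      using that by auto
    then show ?thesis
      using tree conn acyc that unfolding bip_tree_def netAdj_remove_pool by auto
  qed
qed

lemma bip_tree_leaf_cases:
  assumes tree: "bip_tree CI CJ E" and two: "2 \<le> card CI + card CJ"
  obtains (class_leaf) i0 j0 where "i0 \<in> CI" "(i0, j0) \<in> E" "\<And>j. (i0, j) \<in> E \<Longrightarrow> j = j0"
      "bip_tree (CI - {i0}) CJ {e \<in> E. fst e \<noteq> i0}"
  | (pool_leaf) i0 j0 where "j0 \<in> CJ" "(i0, j0) \<in> E" "\<And>i. (i, j0) \<in> E \<Longrightarrow> i = i0"
      "bip_tree CI (CJ - {j0}) {e \<in> E. snd e \<noteq> j0}"
proof -
  let ?V = "Inl ` CI \<union> Inr ` CJ"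
  have fin: "finite ?V" and sub: "E \<subseteq> CI \<times> CJ"
    and conn: "walk_connected ?V (netAdj E)" and acyc: "cycle_free ?V (netAdj E)"
    using tree unfolding bip_tree_def by auto
  have "card ?V = card CI + card CJ"
    using tree unfolding bip_tree_def by (subst card_Un_disjoint) (auto simp: card_image)
  then have "\<not> card ?V \<le> Suc 0"
    using two by simp
  then obtain a b where "a \<in> ?V" "b \<in> ?V" "a \<noteq> b"
    using fin by (meson card_le_Suc0_iff_eq)
  then obtain x y where "netAdj E x y"
    using walk_connected_has_edge[OF conn] by metis
  then obtain v u where v: "v \<in> ?V" "netAdj E v u" and leaf: "\<And>w. netAdj E v w \<Longrightarrow> w = u"
    using cycle_free_has_leaf[OF fin symp_netAdj irreflp_netAdj _ acyc] netAdj_in_vertices[OF sub]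
    by metis
  show ?thesis
  proof (cases v)
    case (Inl i0)
    then obtain j0 where u: "u = Inr j0"
      using v(2) by (cases u) auto
    have "i0 \<in> CI" "(i0, j0) \<in> E"
      using v Inl u by auto
    moreover have "j = j0" if "(i0, j) \<in> E" for j
      using leaf[of "Inr j"] that Inl u by simp
    ultimately show ?thesis
      using class_leaf bip_tree_remove_leaf(1)[OF tree leaf Inl] by blast
  next
    case (Inr j0)
    then obtain i0 where u: "u = Inl i0"
      using v(2) by (cases u) auto
    have "j0 \<in> CJ" "(i0, j0) \<in> E"
      using v Inr u by auto
    moreover have "i = i0" if "(i, j0) \<in> E" for i
      using leaf[of "Inl i"] that Inr u by simp
    ultimately show ?thesis
      using pool_leaf bip_tree_remove_leaf(2)[OF tree leaf Inr] by blast
  qed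
qed

lemma bip_tree_induct [consumes 1, case_names empty single_pool single_class class_leaf pool_leaf]:
  assumes "bip_tree CI CJ E"
    and empty: "P {} {} {}"
    and single_pool: "\<And>j. P {} {j} {}"
    and single_class: "\<And>i. P {i} {} {}"
    and class_leaf: "\<And>CI CJ E i0 j0. finite CI \<Longrightarrow> finite CJ \<Longrightarrow> E \<subseteq> CI \<times> CJ \<Longrightarrow>
      i0 \<in> CI \<Longrightarrow> (i0, j0) \<in> E \<Longrightarrow> (\<And>j. (i0, j) \<in> E \<Longrightarrow> j = j0) \<Longrightarrow>
      P (CI - {i0}) CJ {e \<in> E. fst e \<noteq> i0} \<Longrightarrow> P CI CJ E"
    and pool_leaf: "\<And>CI CJ E i0 j0. finite CI \<Longrightarrow> finite CJ \<Longrightarrow> E \<subseteq> CI \<times> CJ \<Longrightarrow>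
      j0 \<in> CJ \<Longrightarrow> (i0, j0) \<in> E \<Longrightarrow> (\<And>i. (i, j0) \<in> E \<Longrightarrow> i = i0) \<Longrightarrow>
      P CI (CJ - {j0}) {e \<in> E. snd e \<noteq> j0} \<Longrightarrow> P CI CJ E"
  shows "P CI CJ E"
  using assms(1)
proof (induction "card CI + card CJ" arbitrary: CI CJ E rule: less_induct)
  case less
  have fin: "finite CI" "finite CJ" and sub: "E \<subseteq> CI \<times> CJ"
    using less.prems unfolding bip_tree_def by auto
  show ?case
  proof (cases "card CI + card CJ \<le> 1")
    case True
    then have "card CI + card CJ = 0 \<or> card CI + card CJ = 1"
      by linarith
    then have "CI = {} \<and> CJ = {} \<or> (\<exists>j. CI = {} \<and> CJ = {j}) \<or> (\<exists>i. CI = {i} \<and> CJ = {})"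
      using fin by (auto simp: add_is_1 card_1_singleton_iff)
    moreover from this have "E = {}"
      using sub by auto
    ultimately show ?thesis
      using empty single_pool single_class by auto
  next
    case False
    then have "2 \<le> card CI + card CJ"
      by simp
    with less.prems show ?thesis
    proof (cases rule: bip_tree_leaf_cases)
      case (class_leaf i0 j0)
      have "card (CI - {i0}) + card CJ < card CI + card CJ"
        using card_Diff1_less[OF fin(1) class_leaf(1)] by linarith
      then have "P (CI - {i0}) CJ {e \<in> E. fst e \<noteq> i0}"
        using less.hyps class_leaf(4) by simp
      from assms(5)[OF fin sub class_leaf(1-3) this] show ?thesis .
    next
      case (pool_leaf i0 j0)
      have "card CI + card (CJ - {j0}) < card CI + card CJ"
        using card_Diff1_less[OF fin(2) pool_leaf(1)] by linarith
      then have "P CI (CJ - {j0}) {e \<in> E. snd e \<noteq> j0}"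
        using less.hyps pool_leaf(4) by simp
      from assms(6)[OF fin sub pool_leaf(1-3) this] show ?thesis .
    qed
  qed
qed

section \<open>Flows on a bipartite tree\<close>

definition is_flow :: "nat set \<Rightarrow> nat set \<Rightarrow> (nat \<times> nat) set \<Rightarrow> (nat \<Rightarrow> real) \<Rightarrow> (nat \<Rightarrow> real)
    \<Rightarrow> (nat \<Rightarrow> nat \<Rightarrow> real) \<Rightarrow> bool" where
  "is_flow CI CJ E \<alpha> \<beta> \<psi> \<longleftrightarrow> (\<forall>i\<in>CI. (\<Sum>j\<in>CJ. \<psi> i j) = \<alpha> i) \<and> (\<forall>j\<in>CJ. (\<Sum>i\<in>CI. \<psi> i j) = \<beta> j) \<and>
     (\<forall>i j. (i, j) \<notin> E \<longrightarrow> \<psi> i j = 0)"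

lemma sum_fun_upd:
  fixes f :: "'a \<Rightarrow> 'b::ab_group_add"
  assumes "finite A" "a \<in> A"
  shows "sum (f(a := y)) A = sum f A - f a + y"
proof -
  have "sum (f(a := y)) A = y + sum f (A - {a})"
    using assms by (simp add: sum.remove)
  also have "\<dots> = sum f A - f a + y"
    using assms by (simp add: sum.remove algebra_simps)
  finally show ?thesis .
qed

lemma is_flow_class_leafD:
  assumes fin: "finite CI" "finite CJ" and sub: "E \<subseteq> CI \<times> CJ"
    and i0: "i0 \<in> CI" and edge: "(i0, j0) \<in> E" and leaf: "\<And>j. (i0, j) \<in> E \<Longrightarrow> j = j0"
    and flow: "is_flow CI CJ E \<alpha> \<beta> \<psi>"
  shows "\<psi> i0 = (\<lambda>j. if j = j0 then \<alpha> i0 else 0)" (is "_ = ?row")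
    and "is_flow (CI - {i0}) CJ {e \<in> E. fst e \<noteq> i0} \<alpha> (\<beta>(j0 := \<beta> j0 - \<alpha> i0)) (\<psi>(i0 := \<lambda>_. 0))"
proof -
  have j0: "j0 \<in> CJ"
    using sub edge by auto
  have zero: "\<psi> i0 j = 0" if "j \<noteq> j0" for j
    using flow leaf that unfolding is_flow_def by blast
  have "\<alpha> i0 = (\<Sum>j\<in>CJ. \<psi> i0 j)"
    using flow i0 unfolding is_flow_def by simp
  also have "\<dots> = (\<Sum>j\<in>CJ. if j = j0 then \<psi> i0 j0 else 0)"
    by (rule sum.cong) (auto simp: zero)
  also have "\<dots> = \<psi> i0 j0"
    using fin j0 by simp
  finally have "\<alpha> i0 = \<psi> i0 j0" .
  then show row: "\<psi> i0 = ?row"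
    by (intro ext) (simp add: zero)
  show "is_flow (CI - {i0}) CJ {e \<in> E. fst e \<noteq> i0} \<alpha> (\<beta>(j0 := \<beta> j0 - \<alpha> i0)) (\<psi>(i0 := \<lambda>_. 0))"
    unfolding is_flow_def
  proof (intro conjI ballI allI impI)
    show "(\<Sum>j\<in>CJ. (\<psi>(i0 := \<lambda>_. 0)) i j) = \<alpha> i" if "i \<in> CI - {i0}" for i
      using flow that unfolding is_flow_def by simp
    show "(\<Sum>i\<in>CI - {i0}. (\<psi>(i0 := \<lambda>_. 0)) i j) = (\<beta>(j0 := \<beta> j0 - \<alpha> i0)) j" if "j \<in> CJ" for j
    proof -
      have "\<beta> j = \<psi> i0 j + (\<Sum>i\<in>CI - {i0}. (\<psi>(i0 := \<lambda>_. 0)) i j)"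
        using flow that fin i0 unfolding is_flow_def by (simp add: sum.remove)
      then show ?thesis
        using row by (cases "j = j0") auto
    qed
    show "(\<psi>(i0 := \<lambda>_. 0)) i j = 0" if "(i, j) \<notin> {e \<in> E. fst e \<noteq> i0}" for i j
      using flow that unfolding is_flow_def by auto
  qed
qed

lemma is_flow_class_leafI:
  assumes fin: "finite CI" "finite CJ" and sub: "E \<subseteq> CI \<times> CJ"
    and i0: "i0 \<in> CI" and edge: "(i0, j0) \<in> E"
    and row: "\<psi> i0 = (\<lambda>j. if j = j0 then \<alpha> i0 else 0)"
    and flow': "is_flow (CI - {i0}) CJ {e \<in> E. fst e \<noteq> i0} \<alpha> (\<beta>(j0 := \<beta> j0 - \<alpha> i0)) (\<psi>(i0 := \<lambda>_. 0))"
  shows "is_flow CI CJ E \<alpha> \<beta> \<psi>"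
  unfolding is_flow_def
proof (intro conjI ballI allI impI)
  have j0: "j0 \<in> CJ"
    using sub edge by auto
  show "(\<Sum>j\<in>CJ. \<psi> i j) = \<alpha> i" if "i \<in> CI" for i
  proof (cases "i = i0")
    case True
    then show ?thesis
      using row fin j0 by simp
  next
    case False
    then show ?thesis
      using flow' that unfolding is_flow_def by simp
  qed
  show "(\<Sum>i\<in>CI. \<psi> i j) = \<beta> j" if "j \<in> CJ" for j
  proof -
    have "(\<Sum>i\<in>CI. \<psi> i j) = \<psi> i0 j + (\<Sum>i\<in>CI - {i0}. (\<psi>(i0 := \<lambda>_. 0)) i j)"
      using fin i0 by (simp add: sum.remove)
    then show ?thesis
      using flow' that unfolding row is_flow_def by (cases "j = j0") simp_all
  qed
  show "\<psi> i j = 0" if "(i, j) \<notin> E" for i j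
  proof (cases "i = i0")
    case True
    then show ?thesis
      using that edge row by auto
  next
    case False
    have "(i, j) \<notin> {e \<in> E. fst e \<noteq> i0}"
      using that by simp
    then have "(\<psi>(i0 := \<lambda>_. 0)) i j = 0"
      using flow' unfolding is_flow_def by blast
    then show ?thesis
      using False by simp
  qed
qed

lemma is_flow_class_leaf:
  assumes "finite CI" "finite CJ" "E \<subseteq> CI \<times> CJ"
    and "i0 \<in> CI" "(i0, j0) \<in> E" "\<And>j. (i0, j) \<in> E \<Longrightarrow> j = j0"
  shows "is_flow CI CJ E \<alpha> \<beta> \<psi> \<longleftrightarrow> \<psi> i0 = (\<lambda>j. if j = j0 then \<alpha> i0 else 0) \<and>
    is_flow (CI - {i0}) CJ {e \<in> E. fst e \<noteq> i0} \<alpha> (\<beta>(j0 := \<beta> j0 - \<alpha> i0)) (\<psi>(i0 := \<lambda>_. 0))"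
  using is_flow_class_leafD[OF assms] is_flow_class_leafI[OF assms(1-5)] by blast

lemma is_flow_transpose:
  "is_flow CJ CI (prod.swap ` E) \<beta> \<alpha> (\<lambda>j i. \<psi> i j) \<longleftrightarrow> is_flow CI CJ E \<alpha> \<beta> \<psi>"
  unfolding is_flow_def pair_in_swap_image by blast

lemma is_flow_pool_leaf:
  assumes fin: "finite CI" "finite CJ" and sub: "E \<subseteq> CI \<times> CJ"
    and j0: "j0 \<in> CJ" and edge: "(i0, j0) \<in> E" and leaf: "\<And>i. (i, j0) \<in> E \<Longrightarrow> i = i0"
  shows "is_flow CI CJ E \<alpha> \<beta> \<psi> \<longleftrightarrow> (\<lambda>i. \<psi> i j0) = (\<lambda>i. if i = i0 then \<beta> j0 else 0) \<and>
    is_flow CI (CJ - {j0}) {e \<in> E. snd e \<noteq> j0} (\<alpha>(i0 := \<alpha> i0 - \<beta> j0)) \<beta> (\<lambda>i. (\<psi> i)(j0 := 0))"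
proof -
  have sub': "prod.swap ` E \<subseteq> CJ \<times> CI"
    using sub by auto
  have edge': "(j0, i0) \<in> prod.swap ` E"
    using edge by force
  have leaf': "i = i0" if "(j0, i) \<in> prod.swap ` E" for i
    using leaf that by auto
  note transposed = is_flow_class_leaf[OF fin(2,1) sub' j0 edge' leaf']
  have "{e \<in> prod.swap ` E. fst e \<noteq> j0} = prod.swap ` {e \<in> E. snd e \<noteq> j0}"
    by auto
  moreover have "(\<lambda>j i. \<psi> i j)(j0 := \<lambda>_. 0) = (\<lambda>j i. ((\<psi> i)(j0 := 0)) j)"
    by auto
  ultimately show ?thesis
    using transposed[of \<beta> \<alpha> "\<lambda>j i. \<psi> i j"] by (simp only: is_flow_transpose)
qed

lemma is_flow_no_edges:
  "is_flow CI CJ {} \<alpha> \<beta> \<psi> \<longleftrightarrow> \<psi> = (\<lambda>_ _. 0) \<and> (\<forall>i\<in>CI. \<alpha> i = 0) \<and> (\<forall>j\<in>CJ. \<beta> j = 0)"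
  unfolding is_flow_def by (auto simp: fun_eq_iff)

lemma ex1_flow_class_leaf:
  assumes "finite CI" "finite CJ" "E \<subseteq> CI \<times> CJ"
    and "i0 \<in> CI" "(i0, j0) \<in> E" "\<And>j. (i0, j) \<in> E \<Longrightarrow> j = j0"
    and "\<exists>!\<psi>. is_flow (CI - {i0}) CJ {e \<in> E. fst e \<noteq> i0} \<alpha> (\<beta>(j0 := \<beta> j0 - \<alpha> i0)) \<psi>"
  shows "\<exists>!\<psi>. is_flow CI CJ E \<alpha> \<beta> \<psi>"
proof -
  let ?row = "\<lambda>j. if j = j0 then \<alpha> i0 else 0"
  note leaf_iff = is_flow_class_leaf[OF assms(1-6)]
  obtain \<psi>' where \<psi>': "is_flow (CI - {i0}) CJ {e \<in> E. fst e \<noteq> i0} \<alpha> (\<beta>(j0 := \<beta> j0 - \<alpha> i0)) \<psi>'"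
    and unique: "\<forall>\<phi>. is_flow (CI - {i0}) CJ {e \<in> E. fst e \<noteq> i0} \<alpha> (\<beta>(j0 := \<beta> j0 - \<alpha> i0)) \<phi> \<longrightarrow> \<phi> = \<psi>'"
    using assms(7) by (rule ex1E)
  have "\<psi>' i0 = (\<lambda>_. 0)"
    using \<psi>' unfolding is_flow_def by (simp add: fun_eq_iff)
  then have "is_flow CI CJ E \<alpha> \<beta> (\<psi>'(i0 := ?row))"
    using leaf_iff \<psi>' by (simp add: fun_upd_idem)
  moreover have "\<phi> = \<psi>'(i0 := ?row)" if "is_flow CI CJ E \<alpha> \<beta> \<phi>" for \<phi>
  proof -
    have "\<phi> i0 = ?row" "\<phi>(i0 := \<lambda>_. 0) = \<psi>'"
      using that leaf_iff unique by simp_all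
    then show ?thesis
      by (metis fun_upd_triv fun_upd_upd)
  qed
  ultimately show ?thesis
    by (rule ex1I)
qed

lemma ex1_flow_pool_leaf:
  assumes "finite CI" "finite CJ" "E \<subseteq> CI \<times> CJ"
    and "j0 \<in> CJ" "(i0, j0) \<in> E" "\<And>i. (i, j0) \<in> E \<Longrightarrow> i = i0"
    and "\<exists>!\<psi>. is_flow CI (CJ - {j0}) {e \<in> E. snd e \<noteq> j0} (\<alpha>(i0 := \<alpha> i0 - \<beta> j0)) \<beta> \<psi>"
  shows "\<exists>!\<psi>. is_flow CI CJ E \<alpha> \<beta> \<psi>"
proof -
  let ?col = "\<lambda>i. if i = i0 then \<beta> j0 else 0"
  note leaf_iff = is_flow_pool_leaf[OF assms(1-6)]
  obtain \<psi>' where \<psi>': "is_flow CI (CJ - {j0}) {e \<in> E. snd e \<noteq> j0} (\<alpha>(i0 := \<alpha> i0 - \<beta> j0)) \<beta> \<psi>'"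
    and unique: "\<forall>\<phi>. is_flow CI (CJ - {j0}) {e \<in> E. snd e \<noteq> j0} (\<alpha>(i0 := \<alpha> i0 - \<beta> j0)) \<beta> \<phi> \<longrightarrow> \<phi> = \<psi>'"
    using assms(7) by (rule ex1E)
  have "\<psi>' i j0 = 0" for i
    using \<psi>' unfolding is_flow_def by simp
  then have "is_flow CI CJ E \<alpha> \<beta> (\<lambda>i. (\<psi>' i)(j0 := ?col i))"
    using leaf_iff \<psi>' by (simp add: fun_upd_idem)
  moreover have "\<phi> = (\<lambda>i. (\<psi>' i)(j0 := ?col i))" if "is_flow CI CJ E \<alpha> \<beta> \<phi>" for \<phi>
  proof -
    have "(\<lambda>i. \<phi> i j0) = ?col" "(\<lambda>i. (\<phi> i)(j0 := 0)) = \<psi>'"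
      using that leaf_iff unique by simp_all
    then have col: "\<phi> i j0 = ?col i" and rest: "(\<phi> i)(j0 := 0) = \<psi>' i" for i
      by (simp_all add: fun_eq_iff)
    have "\<phi> = (\<lambda>i. ((\<phi> i)(j0 := 0))(j0 := \<phi> i j0))"
      by simp
    then show ?thesis
      by (simp only: col rest)
  qed
  ultimately show ?thesis
    by (rule ex1I)
qed

lemma bip_tree_ex1_flow:
  assumes "bip_tree CI CJ E" "sum \<alpha> CI = sum \<beta> CJ"
  shows "\<exists>!\<psi>. is_flow CI CJ E \<alpha> \<beta> \<psi>"
  using assms
proof (induction arbitrary: \<alpha> \<beta> rule: bip_tree_induct)
  case (class_leaf CI CJ E i0 j0)
  have "j0 \<in> CJ"
    using class_leaf.hyps(3,5) by auto
  then have "sum (\<beta>(j0 := \<beta> j0 - \<alpha> i0)) CJ = sum \<beta> CJ - \<beta> j0 + (\<beta> j0 - \<alpha> i0)"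
    using class_leaf.hyps(2) by (rule sum_fun_upd[rotated])
  moreover have "sum \<alpha> (CI - {i0}) = sum \<alpha> CI - \<alpha> i0"
    using class_leaf.hyps(1,4) by (simp add: sum_diff1)
  ultimately have "sum \<alpha> (CI - {i0}) = sum (\<beta>(j0 := \<beta> j0 - \<alpha> i0)) CJ"
    using class_leaf.prems by simp
  then have "\<exists>!\<psi>. is_flow (CI - {i0}) CJ {e \<in> E. fst e \<noteq> i0} \<alpha> (\<beta>(j0 := \<beta> j0 - \<alpha> i0)) \<psi>"
    by (rule class_leaf.IH)
  from ex1_flow_class_leaf[OF class_leaf.hyps(1-6) this] show ?case .
next
  case (pool_leaf CI CJ E i0 j0)
  have "i0 \<in> CI"
    using pool_leaf.hyps(3,5) by auto
  then have "sum (\<alpha>(i0 := \<alpha> i0 - \<beta> j0)) CI = sum \<alpha> CI - \<alpha> i0 + (\<alpha> i0 - \<beta> j0)"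
    using pool_leaf.hyps(1) by (rule sum_fun_upd[rotated])
  moreover have "sum \<beta> (CJ - {j0}) = sum \<beta> CJ - \<beta> j0"
    using pool_leaf.hyps(2,4) by (simp add: sum_diff1)
  ultimately have "sum (\<alpha>(i0 := \<alpha> i0 - \<beta> j0)) CI = sum \<beta> (CJ - {j0})"
    using pool_leaf.prems by simp
  then have "\<exists>!\<psi>. is_flow CI (CJ - {j0}) {e \<in> E. snd e \<noteq> j0} (\<alpha>(i0 := \<alpha> i0 - \<beta> j0)) \<beta> \<psi>"
    by (rule pool_leaf.IH)
  from ex1_flow_pool_leaf[OF pool_leaf.hyps(1-6) this] show ?case .
qed (rule ex1I[where a = "\<lambda>_ _. 0"]; simp add: is_flow_no_edges)+

section \<open>Service rates are linear in the margins\<close>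

definition ranked_lower_triangular :: "nat set \<Rightarrow> (nat \<Rightarrow> nat) \<Rightarrow> (nat \<Rightarrow> nat \<Rightarrow> real) \<Rightarrow> bool" where
  "ranked_lower_triangular CI rk B \<longleftrightarrow> inj_on rk CI \<and> rk ` CI \<subseteq> {..<card CI} \<and>
     (\<forall>i\<in>CI. \<forall>k\<in>CI. rk i < rk k \<longrightarrow> B i k = 0) \<and> (\<forall>i\<in>CI. 0 < B i i)"

definition flow_rate_repr :: "nat set \<Rightarrow> nat set \<Rightarrow> (nat \<times> nat) set \<Rightarrow> (nat \<Rightarrow> nat \<Rightarrow> real)
    \<Rightarrow> (nat \<Rightarrow> nat \<Rightarrow> real) \<Rightarrow> (nat \<Rightarrow> nat \<Rightarrow> real) \<Rightarrow> bool" where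
  "flow_rate_repr CI CJ E \<mu> B1 B2 \<longleftrightarrow> (\<forall>\<alpha> \<beta> \<psi>. is_flow CI CJ E \<alpha> \<beta> \<psi> \<longrightarrow>
     (\<forall>i\<in>CI. (\<Sum>j\<in>CJ. \<mu> i j * \<psi> i j) = (\<Sum>k\<in>CI. B1 i k * \<alpha> k) + (\<Sum>j\<in>CJ. B2 i j * \<beta> j)))"

lemma ranked_lower_triangular_class_leaf:
  assumes "finite CI" "i0 \<in> CI" "ranked_lower_triangular (CI - {i0}) rk B" "0 < c"
  shows "ranked_lower_triangular CI (\<lambda>i. if i = i0 then 0 else Suc (rk i))
    (\<lambda>i. if i = i0 then (\<lambda>k. if k = i0 then c else 0) else (B i)(i0 := b i))"
proof -
  have "card CI = Suc (card (CI - {i0}))"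
    using assms(1,2) by (rule card_Suc_Diff1[symmetric])
  then show ?thesis
    using assms(3,4) unfolding ranked_lower_triangular_def inj_on_def by auto
qed

lemma sum_mult_fun_upd:
  fixes f g :: "'a \<Rightarrow> 'b::comm_ring"
  assumes "finite A" "a \<in> A"
  shows "(\<Sum>x\<in>A. f x * (g(a := y)) x) = (\<Sum>x\<in>A. f x * g x) + f a * (y - g a)"
proof -
  have "(\<lambda>x. f x * (g(a := y)) x) = (\<lambda>x. f x * g x)(a := f a * y)"
    by (simp add: fun_eq_iff)
  then have "(\<Sum>x\<in>A. f x * (g(a := y)) x) = (\<Sum>x\<in>A. f x * g x) - f a * g a + f a * y"
    using sum_fun_upd[OF assms, of "\<lambda>x. f x * g x"] by (simp only:)
  then show ?thesis
    by (simp add: algebra_simps)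
qed

text \<open>
  The leaf class is served only through \<open>(i0, j0)\<close>, at rate \<open>\<mu> i0 j0 * \<alpha> i0\<close>. For every other
  class the margin of \<open>j0\<close> in the reduced problem is \<open>\<beta> j0 - \<alpha> i0\<close>, which moves the coefficient
  \<open>- B2 i j0\<close> onto \<open>\<alpha> i0\<close>.
\<close>
lemma flow_rate_repr_class_leaf:
  assumes fin: "finite CI" "finite CJ" and sub: "E \<subseteq> CI \<times> CJ"
    and i0: "i0 \<in> CI" and edge: "(i0, j0) \<in> E" and leaf: "\<And>j. (i0, j) \<in> E \<Longrightarrow> j = j0"
    and repr: "flow_rate_repr (CI - {i0}) CJ {e \<in> E. fst e \<noteq> i0} \<mu> B1 B2"
  shows "flow_rate_repr CI CJ E \<mu>
    (\<lambda>i. if i = i0 then (\<lambda>k. if k = i0 then \<mu> i0 j0 else 0) else (B1 i)(i0 := - B2 i j0))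
    (\<lambda>i. if i = i0 then (\<lambda>_. 0) else B2 i)"
  unfolding flow_rate_repr_def
proof (intro allI impI ballI)
  fix \<alpha> \<beta> \<psi> i assume flow: "is_flow CI CJ E \<alpha> \<beta> \<psi>" and i: "i \<in> CI"
  have j0: "j0 \<in> CJ"
    using sub edge by auto
  have row: "\<psi> i0 = (\<lambda>j. if j = j0 then \<alpha> i0 else 0)"
    and flow': "is_flow (CI - {i0}) CJ {e \<in> E. fst e \<noteq> i0} \<alpha> (\<beta>(j0 := \<beta> j0 - \<alpha> i0)) (\<psi>(i0 := \<lambda>_. 0))"
    using flow is_flow_class_leaf[OF fin sub i0 edge leaf] by blast+
  show "(\<Sum>j\<in>CJ. \<mu> i j * \<psi> i j) =
    (\<Sum>k\<in>CI. (if i = i0 then (\<lambda>k. if k = i0 then \<mu> i0 j0 else 0) else (B1 i)(i0 := - B2 i j0)) k * \<alpha> k) +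
    (\<Sum>j\<in>CJ. (if i = i0 then (\<lambda>_. 0) else B2 i) j * \<beta> j)"
  proof (cases "i = i0")
    case True
    then show ?thesis
      using fin i0 j0 by (simp add: row if_distrib[of "times _"] if_distrib[of "\<lambda>x. x * _"] cong: if_cong)
  next
    case False
    have "(\<Sum>j\<in>CJ. \<mu> i j * (\<psi>(i0 := \<lambda>_. 0)) i j) =
        (\<Sum>k\<in>CI - {i0}. B1 i k * \<alpha> k) + (\<Sum>j\<in>CJ. B2 i j * (\<beta>(j0 := \<beta> j0 - \<alpha> i0)) j)"
      using repr flow' i False unfolding flow_rate_repr_def by blast
    moreover have "(\<Sum>j\<in>CJ. B2 i j * (\<beta>(j0 := \<beta> j0 - \<alpha> i0)) j) =
        (\<Sum>j\<in>CJ. B2 i j * \<beta> j) - B2 i j0 * \<alpha> i0"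
      using sum_mult_fun_upd[OF fin(2) j0, of "B2 i" \<beta> "\<beta> j0 - \<alpha> i0"] by (simp add: algebra_simps)
    moreover have "(\<Sum>k\<in>CI. ((B1 i)(i0 := - B2 i j0)) k * \<alpha> k) =
        (\<Sum>k\<in>CI. B1 i k * \<alpha> k) - B1 i i0 * \<alpha> i0 - B2 i j0 * \<alpha> i0"
      using sum_mult_fun_upd[OF fin(1) i0, of \<alpha> "B1 i" "- B2 i j0"] by (simp add: algebra_simps)
    moreover have "(\<Sum>k\<in>CI. B1 i k * \<alpha> k) = B1 i i0 * \<alpha> i0 + (\<Sum>k\<in>CI - {i0}. B1 i k * \<alpha> k)"
      using fin(1) i0 by (rule sum.remove)
    ultimately show ?thesis
      using False by (simp del: fun_upd_apply add: fun_upd_other[OF False])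
  qed
qed

text \<open>
  Pool \<open>j0\<close> is fed only by \<open>i0\<close>, with flow \<open>\<beta> j0\<close>; the reduced problem charges this flow to the
  margin of \<open>i0\<close>, and the new column \<open>j0\<close> of \<open>B2\<close> compensates for it.
\<close>
lemma flow_rate_repr_pool_leaf:
  assumes fin: "finite CI" "finite CJ" and sub: "E \<subseteq> CI \<times> CJ"
    and j0: "j0 \<in> CJ" and edge: "(i0, j0) \<in> E" and leaf: "\<And>i. (i, j0) \<in> E \<Longrightarrow> i = i0"
    and repr: "flow_rate_repr CI (CJ - {j0}) {e \<in> E. snd e \<noteq> j0} \<mu> B1 B2"
  shows "flow_rate_repr CI CJ E \<mu> B1 (\<lambda>i. (B2 i)(j0 := (if i = i0 then \<mu> i0 j0 else 0) - B1 i i0))"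
  unfolding flow_rate_repr_def
proof (intro allI impI ballI)
  fix \<alpha> \<beta> \<psi> i assume flow: "is_flow CI CJ E \<alpha> \<beta> \<psi>" and i: "i \<in> CI"
  let ?c = "(if i = i0 then \<mu> i0 j0 else 0) - B1 i i0"
  have i0: "i0 \<in> CI"
    using sub edge by auto
  have col: "(\<lambda>i. \<psi> i j0) = (\<lambda>i. if i = i0 then \<beta> j0 else 0)"
    and flow': "is_flow CI (CJ - {j0}) {e \<in> E. snd e \<noteq> j0} (\<alpha>(i0 := \<alpha> i0 - \<beta> j0)) \<beta> (\<lambda>i. (\<psi> i)(j0 := 0))"
    using flow is_flow_pool_leaf[OF fin sub j0 edge leaf] by blast+
  have "(\<Sum>j\<in>CJ - {j0}. \<mu> i j * ((\<psi> i)(j0 := 0)) j) =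
      (\<Sum>k\<in>CI. B1 i k * (\<alpha>(i0 := \<alpha> i0 - \<beta> j0)) k) + (\<Sum>j\<in>CJ - {j0}. B2 i j * \<beta> j)"
    using repr flow' i unfolding flow_rate_repr_def by blast
  moreover have "(\<Sum>j\<in>CJ - {j0}. \<mu> i j * ((\<psi> i)(j0 := 0)) j) = (\<Sum>j\<in>CJ - {j0}. \<mu> i j * \<psi> i j)"
    by (rule sum.cong) simp_all
  moreover have "(\<Sum>k\<in>CI. B1 i k * (\<alpha>(i0 := \<alpha> i0 - \<beta> j0)) k) = (\<Sum>k\<in>CI. B1 i k * \<alpha> k) - B1 i i0 * \<beta> j0"
    using sum_mult_fun_upd[OF fin(1) i0, of "B1 i" \<alpha> "\<alpha> i0 - \<beta> j0"] by (simp add: algebra_simps)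
  moreover have "(\<Sum>j\<in>CJ. ((B2 i)(j0 := ?c)) j * \<beta> j) = (\<Sum>j\<in>CJ. B2 i j * \<beta> j) + (?c - B2 i j0) * \<beta> j0"
    using sum_mult_fun_upd[OF fin(2) j0, of \<beta> "B2 i" ?c] by (simp add: algebra_simps)
  moreover have "(\<Sum>j\<in>CJ. B2 i j * \<beta> j) = B2 i j0 * \<beta> j0 + (\<Sum>j\<in>CJ - {j0}. B2 i j * \<beta> j)"
    using fin(2) j0 by (rule sum.remove)
  moreover have "(\<Sum>j\<in>CJ. \<mu> i j * \<psi> i j) = \<mu> i j0 * \<psi> i j0 + (\<Sum>j\<in>CJ - {j0}. \<mu> i j * \<psi> i j)"
    using fin(2) j0 by (rule sum.remove)
  moreover have "\<mu> i j0 * \<psi> i j0 = (if i = i0 then \<mu> i0 j0 else 0) * \<beta> j0"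
    using fun_cong[OF col, of i] by auto
  ultimately show "(\<Sum>j\<in>CJ. \<mu> i j * \<psi> i j) =
      (\<Sum>k\<in>CI. B1 i k * \<alpha> k) + (\<Sum>j\<in>CJ. ((B2 i)(j0 := ?c)) j * \<beta> j)"
    by (simp add: algebra_simps)
qed

lemma bip_tree_flow_rate_repr:
  assumes "bip_tree CI CJ E" "\<And>i j. (i, j) \<in> E \<Longrightarrow> 0 < \<mu> i j"
  shows "\<exists>rk B1 B2. ranked_lower_triangular CI rk B1 \<and> flow_rate_repr CI CJ E \<mu> B1 B2"
  using assms
proof (induction rule: bip_tree_induct)
  case (class_leaf CI CJ E i0 j0)
  have "0 < \<mu> i j" if "(i, j) \<in> {e \<in> E. fst e \<noteq> i0}" for i j
    using that class_leaf.prems by simp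
  from class_leaf.IH[OF this] obtain rk B1 B2 where tri: "ranked_lower_triangular (CI - {i0}) rk B1"
    and repr: "flow_rate_repr (CI - {i0}) CJ {e \<in> E. fst e \<noteq> i0} \<mu> B1 B2"
    by blast
  have "0 < \<mu> i0 j0"
    using class_leaf.prems class_leaf.hyps(5) .
  note tri' = ranked_lower_triangular_class_leaf[OF class_leaf.hyps(1,4) tri this, where b = "\<lambda>i. - B2 i j0"]
  note repr' = flow_rate_repr_class_leaf[OF class_leaf.hyps(1-6) repr]
  from tri' repr' show ?case
    by blast
next
  case (pool_leaf CI CJ E i0 j0)
  have "0 < \<mu> i j" if "(i, j) \<in> {e \<in> E. snd e \<noteq> j0}" for i j
    using that pool_leaf.prems by simp
  from pool_leaf.IH[OF this] obtain rk B1 B2 where tri: "ranked_lower_triangular CI rk B1"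
    and repr: "flow_rate_repr CI (CJ - {j0}) {e \<in> E. snd e \<noteq> j0} \<mu> B1 B2"
    by blast
  from tri flow_rate_repr_pool_leaf[OF pool_leaf.hyps(1-6) repr] show ?case
    by blast
qed (rule exI[of _ "\<lambda>_. 0"], rule exI[of _ "\<lambda>_ _. 1"],
     simp add: ranked_lower_triangular_def flow_rate_repr_def is_flow_no_edges)+

section \<open>The drift\<close>

lemma is_walk_iff: "is_walk E ps \<longleftrightarrow> ps \<noteq> [] \<and> successively (netAdj E) ps"
  by (simp add: is_walk_def successively_conv_nth)

lemma is_tree_imp_bip_tree: "is_tree nI nJ E \<Longrightarrow> bip_tree {..<nI} {..<nJ} E"
  unfolding is_tree_def bip_tree_def graph_connected_def has_cycle_def walk_connected_def
    cycle_free_def is_path_def netV_def is_walk_iff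
  by auto

lemma Gmat_is_flow:
  assumes "is_tree nI nJ E" "sum \<alpha> {..<nI} = sum \<beta> {..<nJ}"
  shows "is_flow {..<nI} {..<nJ} E \<alpha> \<beta> (Gmat nI nJ E \<alpha> \<beta>)"
proof -
  have "Gmat nI nJ E \<alpha> \<beta> = (THE \<psi>. is_flow {..<nI} {..<nJ} E \<alpha> \<beta> \<psi>)"
    by (simp add: Gmat_def is_flow_def Ball_def)
  then show ?thesis
    using theI'[OF bip_tree_ex1_flow[OF is_tree_imp_bip_tree[OF assms(1)] assms(2)]] by simp
qed

lemma drift_eq_flow_rate_repr:
  assumes tree: "is_tree nI nJ E" and repr: "flow_rate_repr {..<nI} {..<nJ} E \<mu> B1 B2"
    and act: "actU nI nJ uc us" and i: "i < nI"
  shows "drift nI nJ E \<mu> \<gamma> ell x uc us i =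
     - (\<Sum>k<nI. B1 i k * (x k - pospart (esum nI x) * uc k))
     + negpart (esum nI x) * (\<Sum>j<nJ. B2 i j * us j)
     - pospart (esum nI x) * \<gamma> i * uc i + ell i"
proof -
  define p where "p = pospart (esum nI x)"
  define q where "q = negpart (esum nI x)"
  define \<alpha> where "\<alpha> k = x k - p * uc k" for k
  define \<beta> where "\<beta> j = - q * us j" for j
  have "sum \<alpha> {..<nI} = esum nI x - p"
    using act by (simp add: \<alpha>_def actU_def esum_def sum_subtractf sum_distrib_left[symmetric])
  also have "\<dots> = - q"
    by (simp add: p_def q_def pospart_def negpart_def)
  also have "\<dots> = sum \<beta> {..<nJ}"
    using act by (simp add: \<beta>_def actU_def esum_def sum_negf sum_distrib_left[symmetric])
  finally have flow: "is_flow {..<nI} {..<nJ} E \<alpha> \<beta> (Ghat nI nJ E uc us x)"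
    unfolding Ghat_def p_def q_def \<alpha>_def \<beta>_def by (rule Gmat_is_flow[OF tree])
  have "(\<Sum>j\<in>{j. j < nJ \<and> (i, j) \<in> E}. \<mu> i j * Ghat nI nJ E uc us x i j) =
      (\<Sum>j<nJ. \<mu> i j * Ghat nI nJ E uc us x i j)"
    using flow by (intro sum.mono_neutral_left) (auto simp: is_flow_def)
  also have "\<dots> = (\<Sum>k<nI. B1 i k * \<alpha> k) + (\<Sum>j<nJ. B2 i j * \<beta> j)"
    using repr flow i unfolding flow_rate_repr_def by blast
  finally show ?thesis
    by (simp add: drift_def \<alpha>_def \<beta>_def p_def q_def sum_distrib_left sum_negf algebra_simps)
qed

theorem mainTheorem5:
  fixes nI nJ :: nat and E :: "(nat \<times> nat) set"
    and lam \<gamma> ell :: "nat \<Rightarrow> real" and \<mu> :: "nat \<Rightarrow> nat \<Rightarrow> real"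
  assumes "nI \<ge> 1" and "nJ \<ge> 1"
    and "is_tree nI nJ E"
    and "\<forall>i<nI. lam i > 0"
    and "\<forall>i<nI. \<gamma> i \<ge> 0"
    and "\<forall>i<nI. \<forall>j<nJ. (i, j) \<in> E \<longrightarrow> \<mu> i j > 0"
    and "\<forall>i<nI. \<forall>j<nJ. (i, j) \<notin> E \<longrightarrow> \<mu> i j = 0"
  shows "\<exists>\<sigma> :: nat \<Rightarrow> nat. \<exists>B1 :: nat \<Rightarrow> nat \<Rightarrow> real. \<exists>B2 :: nat \<Rightarrow> nat \<Rightarrow> real.
           bij_betw \<sigma> {..<nI} {..<nI} \<and>
           (\<forall>i<nI. \<forall>k<nI. \<sigma> i < \<sigma> k \<longrightarrow> B1 i k = 0) \<and>
           (\<forall>i<nI. B1 i i > 0) \<and>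
           (\<forall>x uc us. actU nI nJ uc us \<longrightarrow>
              (\<forall>i<nI. drift nI nJ E \<mu> \<gamma> ell x uc us i =
                 - (\<Sum>k<nI. B1 i k * (x k - pospart (esum nI x) * uc k))
                 + negpart (esum nI x) * (\<Sum>j<nJ. B2 i j * us j)
                 - pospart (esum nI x) * \<gamma> i * uc i + ell i))"
proof -
  have "E \<subseteq> {..<nI} \<times> {..<nJ}"
    using assms(3) unfolding is_tree_def by blast
  then have "0 < \<mu> i j" if "(i, j) \<in> E" for i j
    using assms(6) that by blast
  then obtain rk B1 B2 where tri: "ranked_lower_triangular {..<nI} rk B1"
    and repr: "flow_rate_repr {..<nI} {..<nJ} E \<mu> B1 B2"
    using bip_tree_flow_rate_repr[OF is_tree_imp_bip_tree[OF assms(3)]] by blast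
  have "bij_betw rk {..<nI} {..<nI}"
    using tri unfolding ranked_lower_triangular_def bij_betw_def by (simp add: endo_inj_surj)
  moreover have "\<forall>i<nI. \<forall>k<nI. rk i < rk k \<longrightarrow> B1 i k = 0" "\<forall>i<nI. B1 i i > 0"
    using tri unfolding ranked_lower_triangular_def by auto
  moreover have "\<forall>x uc us. actU nI nJ uc us \<longrightarrow>
      (\<forall>i<nI. drift nI nJ E \<mu> \<gamma> ell x uc us i =
         - (\<Sum>k<nI. B1 i k * (x k - pospart (esum nI x) * uc k))
         + negpart (esum nI x) * (\<Sum>j<nJ. B2 i j * us j)
         - pospart (esum nI x) * \<gamma> i * uc i + ell i)"
    by (simp add: drift_eq_flow_rate_repr[OF assms(3) repr])
  ultimately show ?thesis
    by (intro exI[of _ rk] exI[of _ B1] exI[of _ B2] conjI)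
qed

end
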